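(* Let $n\ge 1$, $d\ge r\ge 1$, let $\mathrm{St}(d,r)=\{x\in\mathbb{R}^{d\times r}: x^\top x=I_r\}$ with tangent spaces $\mathrm{T}_x\mathcal{M}=\{\xi\in\mathbb{R}^{d\times r}: x^\top\xi+\xi^\top x=0\}$, and let $W\in\mathbb{R}^{n\times n}$ be a symmetric, nonnegative, doubly stochastic matrix and $t\ge 1$ an integer. Let $\mathcal{R}$ be a retraction on $\mathrm{St}(d,r)$ and $M>0$ a constant such that $\|\mathcal{R}_x(\xi)-(x+\xi)\|_F\le M\|\xi\|_F^2$ for all $x\in\mathrm{St}(d,r)$, $\xi\in \mathrm{T}_x\mathcal{M}$. Let $\delta_1,\delta_2>0$ satisfy $\delta_1\le \frac{1}{5\sqrt r}\delta_2$ and $\delta_2\le \frac16$. Suppose $\mathbf{x}_k=(x_{1,k},\dots,x_{n,k})\in\mathcal{N}$ and $\mathbf{x}_{k+1}=(x_{1,k+1},\dots,x_{n,k+1})\in\mathcal{N}_1$, where for each $i\in[n]$ $$x_{i,k+1}=\mathcal{R}_{x_{i,k}}\big(-\alpha\,\mathrm{grad}\,\varphi_i^t(\mathbf{x}_k)+\beta u_{i,k}\big),$$ with $u_{i,k}\in\mathrm{T}_{x_{i,k}}\mathcal{M}$, $0\le\alpha\le \frac1M$ and $\beta\ge 0$. Let $\mathbf{u}_k=(u_{1,k},\dots,u_{n,k})$ and $\hat u_k=\frac1n\sum_{i=1}^n u_{i,k}$. Then $$\|\bar x_k-\bar x_{k+1}\|_F\le \frac{1}{1-2\delta_1^2}\left(\frac{2L_t^2\alpha+L_t\alpha}{n}\|\mathbf{x}_k-\bar{\mathbf{x}}_k\|_F^2+\beta\|\hat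 u_k\|_F+\frac{2M\beta^2}{n}\|\mathbf{u}_k\|_F^2\right),$$ where $\bar x_k,\bar x_{k+1}$ are the induced arithmetic means of $\mathbf{x}_k$, $\mathbf{x}_{k+1}$ and $\bar{\mathbf{x}}_k=(\bar x_k,\dots,\bar x_k)$.
   Context: For $\mathbf{x}=(x_1,\dots,x_n)\in\mathrm{St}(d,r)^n$, $\|\mathbf{x}\|_F^2=\sum_i\|x_i\|_F^2$. The induced arithmetic mean (IAM) is $\bar x\in\arg\min_{y\in\mathrm{St}(d,r)}\sum_{i=1}^n\|y-x_i\|_F^2$, and $\bar{\mathbf{x}}=(\bar x,\dots,\bar x)$. The consensus function is $\varphi^t(\mathbf{x})=\frac14\sum_{i,j=1}^n W^t_{ij}\|x_i-x_j\|_F^2$, where $W^t_{ij}$ is the $(i,j)$ entry of the matrix power $W^t$; its Riemannian gradient has blocks $\mathrm{grad}\,\varphi^t_i(\mathbf{x})=\mathcal{P}_{\mathrm{T}_{x_i}\mathcal{M}}\big(x_i-\sum_{j=1}^n W^t_{ij}x_j\big)$, where $\mathcal{P}_{\mathrm{T}_{x}\mathcal{M}}(y)=y-\frac12 x(x^\top y+y^\top x)$. The constant $L_t=1-\lambda_n(W^t)$, with $\lambda_n(W^t)$ the smallest eigenvalue of $W^t$. The neighborhoods are $\mathcal{N}_1=\{\mathbf{x}\in\mathrm{St}(d,r)^n:\|\mathbf{x}-\bar{\mathbf{x}}\|_F^2\le n\delta_1^2\}$, $\mathcal{N}_2=\{\mathbf{x}\in\mathrm{St}(d,r)^n:\max_{i\in[n]}\|x_i-\bar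 x\|_F\le\delta_2\}$, and $\mathcal{N}=\mathcal{N}_1\cap\mathcal{N}_2$. *)

theory Defs
  imports "HOL-Analysis.Analysis"
begin

text \<open>Matrices in R^(d x r) are represented as real^'r^'d (rows indexed by 'd,
  columns by 'r). The HOL-Analysis norm on this type is the Frobenius norm.\<close>

fun matpow :: "real^'n^'n \<Rightarrow> nat \<Rightarrow> real^'n^'n" where
  "matpow A 0 = mat 1"
| "matpow A (Suc k) = A ** matpow A k"

definition stiefel :: "(real^'r^'d) set" where
  "stiefel = {x. transpose x ** x = mat 1}"

definition tangent_space :: "real^'r^'d \<Rightarrow> (real^'r^'d) set" where
  "tangent_space x = {\<xi>. transpose x ** \<xi> + transpose \<xi> ** x = 0}"

definition proj_tangent :: "real^'r^'d \<Rightarrow> real^'r^'d \<Rightarrow> real^'r^'d" where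
  "proj_tangent x y = y - (1/2) *\<^sub>R (x ** (transpose x ** y + transpose y ** x))"

definition is_retraction :: "(real^'r^'d \<Rightarrow> real^'r^'d \<Rightarrow> real^'r^'d) \<Rightarrow> bool" where
  "is_retraction R \<longleftrightarrow>
     (\<forall>x\<in>stiefel. (\<forall>\<xi>\<in>tangent_space x. R x \<xi> \<in> stiefel) \<and> R x 0 = x \<and>
        ((R x) has_derivative id) (at 0 within tangent_space x))"

definition is_IAM :: "('n::finite \<Rightarrow> real^'r^'d) \<Rightarrow> real^'r^'d \<Rightarrow> bool" where
  "is_IAM x y \<longleftrightarrow> y \<in> stiefel \<and>
     (\<forall>z\<in>stiefel. (\<Sum>i\<in>UNIV. (norm (y - x i))\<^sup>2) \<le> (\<Sum>i\<in>UNIV. (norm (z - x i))\<^sup>2))"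

definition grad_phi :: "real^'n^'n \<Rightarrow> nat \<Rightarrow> ('n::finite \<Rightarrow> real^'r^'d) \<Rightarrow> 'n \<Rightarrow> real^'r^'d" where
  "grad_phi W t x i = proj_tangent (x i) (x i - (\<Sum>j\<in>UNIV. (matpow W t $ i $ j) *\<^sub>R x j))"

definition min_eigenvalue :: "real^'n^'n \<Rightarrow> real" where
  "min_eigenvalue A = Min {c. \<exists>v. v \<noteq> 0 \<and> A *v v = c *\<^sub>R v}"

definition L_const :: "real^'n^'n \<Rightarrow> nat \<Rightarrow> real" where
  "L_const W t = 1 - min_eigenvalue (matpow W t)"

definition in_N1 :: "real \<Rightarrow> ('n::finite \<Rightarrow> real^'r^'d) \<Rightarrow> real^'r^'d \<Rightarrow> bool" where
  "in_N1 \<delta>1 x xbar \<longleftrightarrow> (\<forall>i. x i \<in> stiefel) \<and>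
     (\<Sum>i\<in>UNIV. (norm (x i - xbar))\<^sup>2) \<le> real CARD('n) * \<delta>1\<^sup>2"

definition in_N2 :: "real \<Rightarrow> ('n::finite \<Rightarrow> real^'r^'d) \<Rightarrow> real^'r^'d \<Rightarrow> bool" where
  "in_N2 \<delta>2 x xbar \<longleftrightarrow> (\<forall>i. x i \<in> stiefel) \<and> (\<forall>i. norm (x i - xbar) \<le> \<delta>2)"

end

theory Submission
  imports Defs
begin

text \<open>The induced arithmetic mean a of points \<open>x\<^sub>i\<close> on the Stiefel manifold maximizes
  \<open>\<langle>A, a\<rangle>\<close> for the Euclidean mean A, so by first-order optimality A is normal at a:
  \<open>A = a S\<close> with S symmetric.  Since the \<open>x\<^sub>i\<close> are close to a, S is close to the identity,
  \<open>S \<ge> (1 - D/(2n)) I\<close> with \<open>D = \<Sum> \<parallel>x\<^sub>i - a\<parallel>\<^sup>2\<close>.  For two configurations this gives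
  \<open>\<langle>a S - b T, a - b\<rangle> \<ge> (1 - \<delta>\<^sub>1\<^sup>2/2) \<parallel>a - b\<parallel>\<^sup>2\<close>, so the induced means move at most
  \<open>1/(1 - 2\<delta>\<^sub>1\<^sup>2)\<close> times as far as the Euclidean means.  The Euclidean mean moves by the
  average of the steps plus retraction errors of size \<open>M \<parallel>\<xi>\<^sub>i\<parallel>\<^sup>2\<close>.  The consensus gradients
  \<open>g\<^sub>i\<close> satisfy \<open>\<parallel>\<Sum> g\<^sub>i\<parallel> \<le> L\<^sub>t D\<close>, because their sum only retains normal components
  quadratic in the disagreement, and \<open>\<Sum> \<parallel>g\<^sub>i\<parallel>\<^sup>2 \<le> L\<^sub>t\<^sup>2 D\<close>, because \<open>I - W\<^sup>t\<close> is a positive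
  semidefinite form bounded by \<open>L\<^sub>t\<close>.\<close>

section \<open>Matrix algebra with the Frobenius inner product\<close>

lemma inner_matrix_mult_left:
  fixes X :: "real^'m^'d" and Y :: "real^'r^'m" and Z :: "real^'r^'d"
  shows "inner (X ** Y) Z = inner Y (transpose X ** Z)"
  by (simp add: inner_vec_def matrix_matrix_mult_def transpose_def sum_distrib_left
      sum_distrib_right sum.swap[of _ "UNIV::'d set"] mult_ac)
    (intro sum.cong refl, rule sum.swap)

lemma inner_transpose [simp]:
  fixes X Y :: "real^'r^'d"
  shows "inner (transpose X) (transpose Y) = inner X Y"
  by (simp add: inner_vec_def transpose_def sum.swap[of _ "UNIV::'r set"])

lemma norm_transpose [simp]: "norm (transpose X) = norm (X :: real^'r^'d)"
  by (simp add: norm_eq_sqrt_inner)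

lemma inner_matrix_vector_mult_left:
  fixes A :: "real^'m^'n"
  shows "inner (A *v u) v = inner u (transpose A *v v)"
  by (metis dot_lmul_matrix inner_commute transpose_matrix_vector)

lemma matrix_diff_ldistrib:
  fixes X :: "'a::comm_ring_1^'m^'d"
  shows "X ** (Y - Z) = X ** Y - X ** Z"
  by (simp add: matrix_matrix_mult_def vec_eq_iff sum_subtractf algebra_simps)

lemma matrix_add_rdistrib:
  fixes X :: "'a::comm_semiring_1^'m^'d"
  shows "(X + Z) ** Y = X ** Y + Z ** Y"
  by (simp add: matrix_matrix_mult_def vec_eq_iff sum.distrib algebra_simps)

lemma matrix_diff_rdistrib:
  fixes X :: "'a::comm_ring_1^'m^'d"
  shows "(X - Z) ** Y = X ** Y - Z ** Y"
  by (simp add: matrix_matrix_mult_def vec_eq_iff sum_subtractf algebra_simps)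

lemma matrix_sum_ldistrib: "X ** sum Y I = (\<Sum>i\<in>I. X ** Y i)"
  for X :: "'a::comm_semiring_1^'m^'d"
  by (induction I rule: infinite_finite_induct) (auto simp: matrix_add_ldistrib)

lemma matrix_sum_rdistrib: "sum X I ** Y = (\<Sum>i\<in>I. X i ** Y)"
  for Y :: "'a::comm_semiring_1^'r^'m"
  by (induction I rule: infinite_finite_induct) (auto simp: matrix_add_rdistrib)

lemma matrix_vector_mult_sum_rdistrib: "sum X I *v v = (\<Sum>i\<in>I. X i *v v)"
  for v :: "'a::comm_semiring_1^'m"
  by (induction I rule: infinite_finite_induct) (auto simp: matrix_vector_mult_add_rdistrib)

lemma transpose_add: "transpose (X + Y) = transpose X + transpose (Y :: 'a::plus^'r^'d)"
  by (simp add: transpose_def vec_eq_iff)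

lemma transpose_diff: "transpose (X - Y) = transpose X - transpose (Y :: 'a::minus^'r^'d)"
  by (simp add: transpose_def vec_eq_iff)

lemma transpose_sum: "transpose (sum X I) = (\<Sum>i\<in>I. transpose (X i :: 'a::comm_monoid_add^'r^'d))"
  by (induction I rule: infinite_finite_induct) (auto simp: transpose_add transpose_def vec_eq_iff)

lemma norm_power2_rows: "(norm Y)\<^sup>2 = (\<Sum>k\<in>UNIV. (norm (Y$k))\<^sup>2)"
  for Y :: "real^'r^'d"
  by (simp add: power2_norm_eq_inner inner_vec_def)

lemma inner_mat1_eq_trace: "inner (mat 1) A = trace (A :: real^'n^'n)"
  by (simp add: inner_vec_def mat_def trace_def if_distrib if_distribR cong: if_cong)

lemma trace_transpose_mult_self: "trace (transpose Y ** Y) = (norm Y)\<^sup>2"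
  for Y :: "real^'r^'d"
  unfolding power2_norm_eq_inner
  by (simp add: trace_def inner_vec_def matrix_matrix_mult_def transpose_def)
    (rule sum.swap)

lemma inner_transpose_mult_self:
  fixes P :: "real^'r^'r" and Y :: "real^'r^'d"
  shows "inner P (transpose Y ** Y) = (\<Sum>k\<in>UNIV. inner (Y$k) (P *v Y$k))"
proof -
  have "inner P (transpose Y ** Y) = (\<Sum>i\<in>UNIV. \<Sum>j\<in>UNIV. \<Sum>k\<in>UNIV. Y$k$i * (P$i$j * Y$k$j))"
    by (simp add: inner_vec_def matrix_matrix_mult_def transpose_def sum_distrib_left mult_ac)
  also have "\<dots> = (\<Sum>i\<in>UNIV. \<Sum>k\<in>UNIV. \<Sum>j\<in>UNIV. Y$k$i * (P$i$j * Y$k$j))"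
    by (intro sum.cong refl) (rule sum.swap)
  also have "\<dots> = (\<Sum>k\<in>UNIV. \<Sum>i\<in>UNIV. \<Sum>j\<in>UNIV. Y$k$i * (P$i$j * Y$k$j))"
    by (rule sum.swap)
  also have "\<dots> = (\<Sum>k\<in>UNIV. inner (Y$k) (P *v Y$k))"
    by (simp add: inner_vec_def matrix_vector_mult_def sum_distrib_left)
  finally show ?thesis .
qed

lemma norm_matrix_mult_le:
  fixes X :: "real^'m^'d" and Y :: "real^'r^'m"
  shows "norm (X ** Y) \<le> norm X * norm Y"
proof -
  have entry: "(X ** Y)$i$k = inner (X$i) (transpose Y $ k)" for i k
    by (simp add: matrix_matrix_mult_def inner_vec_def transpose_def)
  have "(norm (X ** Y))\<^sup>2 = (\<Sum>i\<in>UNIV. \<Sum>k\<in>UNIV. (inner (X$i) (transpose Y $ k))\<^sup>2)"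
    unfolding power2_norm_eq_inner by (simp add: inner_vec_def entry power2_eq_square)
  also have "\<dots> \<le> (\<Sum>i\<in>UNIV. \<Sum>k\<in>UNIV. (norm (X$i))\<^sup>2 * (norm (transpose Y $ k))\<^sup>2)"
  proof (intro sum_mono)
    fix i k
    show "(inner (X$i) (transpose Y $ k))\<^sup>2 \<le> (norm (X$i))\<^sup>2 * (norm (transpose Y $ k))\<^sup>2"
      using Cauchy_Schwarz_ineq[of "X$i" "transpose Y $ k"] by (simp add: power2_norm_eq_inner)
  qed
  also have "\<dots> = (norm X)\<^sup>2 * (norm (transpose Y))\<^sup>2"
    by (simp only: norm_power2_rows[of X] norm_power2_rows[of "transpose Y"] sum_product)
  finally show ?thesis
    by (simp add: power_mult_distrib[symmetric] power2_le_iff_abs_le)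
qed

section \<open>The Stiefel manifold\<close>

lemma stiefelD: "x \<in> stiefel \<Longrightarrow> transpose x ** x = mat 1"
  by (simp add: stiefel_def)

lemma norm_stiefel_power2: "x \<in> stiefel \<Longrightarrow> (norm x)\<^sup>2 = real CARD('r)"
  for x :: "real^'r^'d"
  by (metis stiefelD trace_I trace_transpose_mult_self)

lemma norm_stiefel_mult: "x \<in> stiefel \<Longrightarrow> norm (x ** H) = norm H"
  for x :: "real^'r^'d" and H :: "real^'m^'r"
  by (simp add: norm_eq_sqrt_inner inner_matrix_mult_left matrix_mul_assoc stiefelD)

lemma norm_stiefel_mult_vec: "x \<in> stiefel \<Longrightarrow> norm (x *v v) = norm v"
  for x :: "real^'r^'d"
  by (simp add: norm_eq_sqrt_inner inner_matrix_vector_mult_left matrix_vector_mul_assoc stiefelD)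

lemma norm_stiefel_diff_power2:
  fixes y z :: "real^'r^'d"
  assumes "y \<in> stiefel" "z \<in> stiefel"
  shows "(norm (y - z))\<^sup>2 = 2 * real CARD('r) - 2 * inner y z"
proof -
  have "(norm (y - z))\<^sup>2 = (norm y)\<^sup>2 - 2 * inner y z + (norm z)\<^sup>2"
    by (simp add: power2_norm_eq_inner inner_diff_left inner_diff_right inner_commute)
  then show ?thesis
    using assms by (simp add: norm_stiefel_power2)
qed

lemma stiefel_transpose_mult_diff:
  fixes a b :: "real^'r^'d"
  assumes "a \<in> stiefel" "b \<in> stiefel"
  shows "transpose a ** (a - b) + transpose (a - b) ** a = transpose (a - b) ** (a - b)"
  using assms by (simp add: matrix_diff_ldistrib matrix_diff_rdistrib transpose_diff stiefelD
      algebra_simps)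

lemma inner_stiefel_mult_diff:
  fixes a b :: "real^'r^'d" and S :: "real^'r^'r"
  assumes "a \<in> stiefel" "b \<in> stiefel" and S: "transpose S = S"
  shows "inner (a ** S) (a - b) = 1/2 * inner S (transpose (a - b) ** (a - b))"
proof -
  have "inner S (transpose (a - b) ** a) = inner S (transpose a ** (a - b))"
    by (metis S inner_transpose matrix_transpose_mul transpose_transpose)
  then have "inner S (transpose (a - b) ** (a - b)) = 2 * inner S (transpose a ** (a - b))"
    by (simp flip: stiefel_transpose_mult_diff[OF assms(1,2)] add: inner_add_right)
  then show ?thesis
    by (simp add: inner_matrix_mult_left inner_commute)
qed

lemma tangent_space_add:
  "a \<in> tangent_space x \<Longrightarrow> b \<in> tangent_space x \<Longrightarrow> a + b \<in> tangent_space x"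
  by (simp add: tangent_space_def matrix_add_ldistrib transpose_add matrix_add_rdistrib algebra_simps)

lemma tangent_space_scaleR: "a \<in> tangent_space x \<Longrightarrow> c *\<^sub>R a \<in> tangent_space x"
proof -
  assume "a \<in> tangent_space x"
  moreover have "transpose x ** (c *\<^sub>R a) + transpose (c *\<^sub>R a) ** x
      = c *\<^sub>R (transpose x ** a + transpose a ** x)"
    by (simp add: matrix_scalar_ac transpose_scalar scaleR_add_right flip: scalar_matrix_assoc)
  ultimately show ?thesis
    by (simp add: tangent_space_def)
qed

lemma inner_tangent_symmetric:
  fixes x \<xi> :: "real^'r^'d" and K :: "real^'r^'r"
  assumes "\<xi> \<in> tangent_space x" "transpose K = K"
  shows "inner \<xi> (x ** K) = 0"
proof -
  let ?G = "transpose x ** \<xi>"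
  have "transpose ?G = - ?G"
    using assms(1) by (simp add: tangent_space_def matrix_transpose_mul eq_neg_iff_add_eq_0 add.commute)
  then have "inner K ?G = - inner K ?G"
    by (metis assms(2) inner_minus_right inner_transpose)
  then show ?thesis
    by (simp add: inner_commute[of \<xi>] inner_matrix_mult_left)
qed

lemma proj_tangent_decomp:
  "y = proj_tangent x y + x ** ((1/2) *\<^sub>R (transpose x ** y + transpose y ** x))"
  by (simp add: proj_tangent_def matrix_scalar_ac flip: scalar_matrix_assoc)

lemma proj_tangent_in_tangent_space:
  fixes x y :: "real^'r^'d"
  assumes "x \<in> stiefel"
  shows "proj_tangent x y \<in> tangent_space x"
proof -
  let ?H = "transpose x ** y + transpose y ** x"
  have H: "transpose ?H = ?H"
    by (simp add: transpose_add matrix_transpose_mul)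
  have left: "transpose x ** proj_tangent x y = transpose x ** y - (1/2) *\<^sub>R ?H"
    using assms by (simp add: proj_tangent_def matrix_diff_ldistrib matrix_scalar_ac
        matrix_mul_assoc stiefelD flip: scalar_matrix_assoc)
  then have right: "transpose (proj_tangent x y) ** x = transpose y ** x - (1/2) *\<^sub>R ?H"
    by (metis H matrix_transpose_mul transpose_diff transpose_scalar transpose_transpose)
  have "transpose x ** proj_tangent x y + transpose (proj_tangent x y) ** x
      = ?H - ((1/2) *\<^sub>R ?H + (1/2) *\<^sub>R ?H)"
    by (simp only: left right) (simp add: algebra_simps)
  also have "\<dots> = 0"
    by (simp flip: scaleR_add_left)
  finally show ?thesis
    by (simp add: tangent_space_def)
qed

lemma norm_proj_tangent_le:
  fixes x y :: "real^'r^'d"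
  assumes "x \<in> stiefel"
  shows "norm (proj_tangent x y) \<le> norm y"
proof -
  let ?K = "(1/2) *\<^sub>R (transpose x ** y + transpose y ** x)"
  have "transpose ?K = ?K"
    by (simp add: transpose_scalar transpose_add matrix_transpose_mul add.commute)
  then have "inner (proj_tangent x y) (x ** ?K) = 0"
    by (rule inner_tangent_symmetric[OF proj_tangent_in_tangent_space[OF assms]])
  then have "(norm y)\<^sup>2 = (norm (proj_tangent x y))\<^sup>2 + (norm (x ** ?K))\<^sup>2"
    by (subst proj_tangent_decomp[of y x])
      (simp add: power2_norm_eq_inner inner_add_left inner_add_right inner_commute)
  then have "(norm (proj_tangent x y))\<^sup>2 \<le> (norm y)\<^sup>2"
    by simp
  then show ?thesis
    by (simp add: power2_le_iff_abs_le)
qed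

section \<open>Positive semidefinite matrices and the smallest eigenvalue\<close>

lemma discriminant_le_if_quadratic_nonneg:
  fixes a b c :: real
  assumes c: "c \<ge> 0" and nonneg: "\<And>t. 0 \<le> a + 2*b*t + c*t\<^sup>2"
  shows "b\<^sup>2 \<le> a*c"
proof (cases "c = 0")
  case True
  have "b = 0"
  proof (rule ccontr)
    assume "b \<noteq> 0"
    then have "a + 2*b*(-(a+1)/(2*b)) + c*(-(a+1)/(2*b))\<^sup>2 = -1"
      using True by (simp add: field_simps)
    then show False
      using nonneg[of "-(a+1)/(2*b)"] by simp
  qed
  then show ?thesis
    using True by simp
next
  case False
  with c have "c > 0" by simp
  moreover have "a + 2*b*(-b/c) + c*(-b/c)\<^sup>2 = a - b\<^sup>2/c"
    using \<open>c > 0\<close> by (simp add: field_simps power2_eq_square)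
  ultimately have "b\<^sup>2/c \<le> a"
    using nonneg[of "-b/c"] by simp
  then show ?thesis
    using \<open>c > 0\<close> by (simp add: field_simps)
qed

lemma psd_cauchy_schwarz:
  fixes P :: "real^'n^'n"
  assumes sym: "transpose P = P" and psd: "\<And>v. 0 \<le> inner v (P *v v)"
  shows "(inner u (P *v v))\<^sup>2 \<le> inner u (P *v u) * inner v (P *v v)"
proof (rule discriminant_le_if_quadratic_nonneg[OF psd])
  fix t :: real
  have "inner v (P *v u) = inner u (P *v v)"
    using inner_matrix_vector_mult_left[of P u v] sym by (simp add: inner_commute)
  then show "0 \<le> inner u (P *v u) + 2 * inner u (P *v v) * t + inner v (P *v v) * t\<^sup>2"
    using psd[of "u + t *\<^sub>R v"]
    by (simp add: matrix_vector_right_distrib matrix_vector_mult_scaleR inner_add_left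
        inner_add_right power2_eq_square algebra_simps)
qed

lemma psd_quadratic_le_trace:
  fixes P :: "real^'n^'n"
  assumes sym: "transpose P = P" and psd: "\<And>v. 0 \<le> inner v (P *v v)"
  shows "inner v (P *v v) \<le> trace P * (norm v)\<^sup>2"
proof -
  let ?q = "inner v (P *v v)"
  have diag: "inner (axis j 1) (P *v axis j 1) = P$j$j" for j
    by (simp add: inner_axis' matrix_vector_mult_basis column_def)
  have "(norm (P *v v))\<^sup>2 = (\<Sum>j\<in>UNIV. ((P *v v)$j)\<^sup>2)"
    unfolding power2_norm_eq_inner by (simp add: inner_vec_def power2_eq_square)
  also have "\<dots> \<le> (\<Sum>j\<in>UNIV. P$j$j * ?q)"
  proof (rule sum_mono)
    fix j
    have "((P *v v)$j)\<^sup>2 = (inner (axis j 1) (P *v v))\<^sup>2"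
      by (simp add: inner_axis')
    then show "((P *v v)$j)\<^sup>2 \<le> P$j$j * ?q"
      using psd_cauchy_schwarz[OF sym psd, of "axis j 1" v] by (simp add: diag)
  qed
  finally have Pv: "(norm (P *v v))\<^sup>2 \<le> trace P * ?q"
    by (simp add: trace_def sum_distrib_right)
  have "?q\<^sup>2 \<le> (norm v * norm (P *v v))\<^sup>2"
    using Cauchy_Schwarz_ineq2[of v "P *v v"] by (metis abs_ge_zero power2_abs power_mono)
  also have "\<dots> = (norm v)\<^sup>2 * (norm (P *v v))\<^sup>2"
    by (simp add: power_mult_distrib)
  also have "\<dots> \<le> (norm v)\<^sup>2 * (trace P * ?q)"
    by (rule mult_left_mono[OF Pv]) simp
  finally have "?q * ?q \<le> ((norm v)\<^sup>2 * trace P) * ?q"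
    by (simp add: power2_eq_square mult_ac)
  moreover have "trace P \<ge> 0"
    unfolding trace_def by (rule sum_nonneg) (metis diag psd)
  ultimately show ?thesis
    using psd[of v] by (cases "?q = 0") (simp_all add: mult_ac)
qed

lemma symmetric_eigenvectors_orthogonal:
  fixes T :: "real^'n^'n"
  assumes sym: "transpose T = T" and u: "T *v u = c *\<^sub>R u" and v: "T *v v = c' *\<^sub>R v"
    and "c \<noteq> c'"
  shows "inner u v = 0"
proof -
  have "c * inner u v = inner (T *v u) v"
    using u by simp
  also have "\<dots> = c' * inner u v"
    using v by (simp add: inner_matrix_vector_mult_left sym)
  finally show ?thesis
    using \<open>c \<noteq> c'\<close> by simp
qed

lemma symmetric_eigenvalues_finite:
  fixes T :: "real^'n^'n"
  assumes sym: "transpose T = T"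
  shows "finite {c. \<exists>v. v \<noteq> 0 \<and> T *v v = c *\<^sub>R v}"
proof -
  define E where "E = {c. \<exists>v. v \<noteq> 0 \<and> T *v v = c *\<^sub>R v}"
  define ev where "ev c = (SOME v. v \<noteq> 0 \<and> T *v v = c *\<^sub>R v)" for c
  have ev: "ev c \<noteq> 0 \<and> T *v ev c = c *\<^sub>R ev c" if "c \<in> E" for c
  proof -
    have "\<exists>v. v \<noteq> 0 \<and> T *v v = c *\<^sub>R v"
      using that by (simp add: E_def)
    then show ?thesis
      unfolding ev_def by (rule someI_ex)
  qed
  have inj: "inj_on ev E"
  proof (rule inj_onI)
    fix c c' assume c: "c \<in> E" and c': "c' \<in> E" and eq: "ev c = ev c'"
    have "c *\<^sub>R ev c = c' *\<^sub>R ev c"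
      using ev[OF c] ev[OF c'] unfolding eq by metis
    then show "c = c'"
      using ev[OF c] by simp
  qed
  have "pairwise orthogonal (ev ` E)"
  proof (rule pairwiseI)
    fix p q
    assume "p \<in> ev ` E" "q \<in> ev ` E" "p \<noteq> q"
    then obtain c c' where c: "c \<in> E" and c': "c' \<in> E" and pq: "p = ev c" "q = ev c'"
      and "c \<noteq> c'"
      by auto
    then show "orthogonal p q"
      using ev[OF c] ev[OF c'] symmetric_eigenvectors_orthogonal[OF sym, of "ev c" c "ev c'" c']
      by (simp add: orthogonal_def)
  qed
  moreover have "0 \<notin> ev ` E"
  proof
    assume "0 \<in> ev ` E"
    then obtain c where "c \<in> E" "ev c = 0"
      by (metis imageE)
    then show False
      using ev by blast
  qed
  ultimately have "independent (ev ` E)"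
    by (rule pairwise_orthogonal_independent)
  then have "finite (ev ` E)"
    using independent_bound by blast
  then show ?thesis
    unfolding E_def[symmetric] using inj by (rule finite_imageD)
qed

lemma psd_quadratic_eq_0_imp:
  fixes P :: "real^'n^'n"
  assumes sym: "transpose P = P" and psd: "\<And>v. 0 \<le> inner v (P *v v)"
    and "inner u (P *v u) = 0"
  shows "P *v u = 0"
  using psd_cauchy_schwarz[OF sym psd, of "P *v u" u] assms(3) by simp

lemma rayleigh_quotient_attains_min:
  fixes T :: "real^'n^'n"
  obtains u where "norm u = 1" and "\<And>y. norm y = 1 \<Longrightarrow> inner u (T *v u) \<le> inner y (T *v y)"
proof -
  let ?f = "\<lambda>v::real^'n. inner v (T *v v)"
  have "axis (undefined :: 'n) (1::real) \<in> sphere 0 1"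
    by simp
  then have "sphere (0::real^'n) 1 \<noteq> {}"
    by blast
  moreover have "continuous_on (sphere 0 1) ?f"
    by (intro continuous_intros)
  ultimately obtain u where "u \<in> sphere 0 1" and "\<forall>y\<in>sphere 0 1. ?f u \<le> ?f y"
    using continuous_attains_inf[OF compact_sphere] by blast
  with that show thesis
    by simp
qed

text \<open>The minimum m of the Rayleigh quotient is an eigenvalue: \<open>T - m I\<close> is positive
  semidefinite and its quadratic form vanishes at the minimizer, so it annihilates the minimizer.\<close>

lemma min_eigenvalue_le_rayleigh:
  fixes T :: "real^'n^'n"
  assumes sym: "transpose T = T"
  shows "min_eigenvalue T * (norm v)\<^sup>2 \<le> inner v (T *v v)"
proof -
  let ?f = "\<lambda>v::real^'n. inner v (T *v v)"
  obtain u where u: "norm u = 1" and umin: "\<And>y. norm y = 1 \<Longrightarrow> ?f u \<le> ?f y"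
    using rayleigh_quotient_attains_min[of T] by blast
  define m where "m = ?f u"
  have fm: "m * (norm y)\<^sup>2 \<le> ?f y" for y
  proof (cases "y = 0")
    case False
    then have "m \<le> ?f (y /\<^sub>R norm y)"
      unfolding m_def by (intro umin) simp
    also have "\<dots> = ?f y / (norm y)\<^sup>2"
      by (simp add: matrix_vector_mult_scaleR power2_eq_square divide_inverse mult_ac)
    finally show ?thesis
      using False by (simp add: field_simps)
  qed simp
  define P where "P = T - m *\<^sub>R mat 1"
  have Pv: "P *v y = T *v y - m *\<^sub>R y" for y
    by (simp add: P_def matrix_vector_mult_diff_rdistrib flip: scaleR_matrix_vector_assoc)
  have Psym: "transpose P = P"
    by (simp add: P_def transpose_diff transpose_scalar sym)
  have Ppsd: "0 \<le> inner y (P *v y)" for y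
    using fm[of y] by (simp add: Pv inner_diff_right power2_norm_eq_inner)
  have "inner u (P *v u) = 0"
    using u by (simp add: Pv inner_diff_right m_def flip: power2_norm_eq_inner)
  then have "P *v u = 0"
    by (rule psd_quadratic_eq_0_imp[OF Psym Ppsd])
  moreover have "u \<noteq> 0"
    using u by auto
  ultimately have "m \<in> {c. \<exists>v. v \<noteq> 0 \<and> T *v v = c *\<^sub>R v}"
    by (auto simp: Pv)
  then have "min_eigenvalue T \<le> m"
    unfolding min_eigenvalue_def by (rule Min_le[OF symmetric_eigenvalues_finite[OF sym]])
  then have "min_eigenvalue T * (norm v)\<^sup>2 \<le> m * (norm v)\<^sup>2"
    by (rule mult_right_mono) simp
  then show ?thesis
    using fm[of v] by simp
qed

section \<open>Induced arithmetic means\<close>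

definition arith_mean :: "('n::finite \<Rightarrow> 'a::real_vector) \<Rightarrow> 'a" where
  "arith_mean x = (1 / real CARD('n)) *\<^sub>R (\<Sum>i\<in>UNIV. x i)"

definition sum_sq_dist :: "('n::finite \<Rightarrow> 'a::real_normed_vector) \<Rightarrow> 'a \<Rightarrow> real" where
  "sum_sq_dist x a = (\<Sum>i\<in>UNIV. (norm (x i - a))\<^sup>2)"

lemma sum_sq_dist_stiefel:
  fixes x :: "'n::finite \<Rightarrow> real^'r^'d"
  assumes "\<forall>i. x i \<in> stiefel" "a \<in> stiefel"
  shows "sum_sq_dist x a = 2 * real CARD('n) * (real CARD('r) - inner (arith_mean x) a)"
proof -
  have "sum_sq_dist x a = (\<Sum>i\<in>UNIV. 2 * real CARD('r) - 2 * inner (x i) a)"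
    using assms by (simp add: sum_sq_dist_def norm_stiefel_diff_power2)
  then show ?thesis
    by (simp add: arith_mean_def sum_subtractf inner_sum_left sum_distrib_left algebra_simps)
qed

lemma iam_maximizes_inner_arith_mean:
  fixes x :: "'n::finite \<Rightarrow> real^'r^'d"
  assumes iam: "is_IAM x a" and xs: "\<forall>i. x i \<in> stiefel" and z: "z \<in> stiefel"
  shows "inner (arith_mean x) z \<le> inner (arith_mean x) a"
proof -
  have a: "a \<in> stiefel"
    using iam by (simp add: is_IAM_def)
  have "sum_sq_dist x a \<le> sum_sq_dist x z"
    using iam z by (simp add: is_IAM_def sum_sq_dist_def norm_minus_commute)
  then show ?thesis
    using sum_sq_dist_stiefel[OF xs a] sum_sq_dist_stiefel[OF xs z] by simp
qed

lemma nonpos_if_le_mult_all_pos: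
  fixes c K :: real
  assumes "\<And>\<theta>. \<theta> > 0 \<Longrightarrow> c \<le> \<theta> * K"
  shows "c \<le> 0"
proof (cases "K > 0")
  case True
  show ?thesis
  proof (rule field_le_epsilon)
    fix e :: real
    assume "e > 0"
    then show "c \<le> 0 + e"
      using assms[of "e / K"] True by simp
  qed
next
  case False
  then show ?thesis
    using assms[of 1] by simp
qed

text \<open>Compare a with the retracted points \<open>R a (\<theta> \<xi>) = a + \<theta> \<xi> + O(\<theta>\<^sup>2)\<close> and let
  \<open>\<theta>\<close> tend to 0.\<close>

lemma inner_tangent_nonpos_if_maximizer:
  fixes A a \<xi> :: "real^'r^'d" and R :: "real^'r^'d \<Rightarrow> real^'r^'d \<Rightarrow> real^'r^'d"
  assumes a: "a \<in> stiefel" and max: "\<And>z. z \<in> stiefel \<Longrightarrow> inner A z \<le> inner A a"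
    and retr: "is_retraction R"
    and Mbound: "\<forall>x\<in>stiefel. \<forall>\<xi>\<in>tangent_space x. norm (R x \<xi> - (x + \<xi>)) \<le> M * (norm \<xi>)\<^sup>2"
    and tan: "\<xi> \<in> tangent_space a"
  shows "inner A \<xi> \<le> 0"
proof (rule nonpos_if_le_mult_all_pos)
  fix \<theta> :: real
  assume "\<theta> > 0"
  have \<theta>\<xi>: "\<theta> *\<^sub>R \<xi> \<in> tangent_space a"
    by (rule tangent_space_scaleR[OF tan])
  define e where "e = R a (\<theta> *\<^sub>R \<xi>) - (a + \<theta> *\<^sub>R \<xi>)"
  have "R a (\<theta> *\<^sub>R \<xi>) \<in> stiefel"
    using retr a \<theta>\<xi> by (simp add: is_retraction_def)
  then have "inner A (a + \<theta> *\<^sub>R \<xi> + e) \<le> inner A a"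
    using max by (simp add: e_def)
  then have "\<theta> * inner A \<xi> \<le> - inner A e"
    by (simp add: inner_add_right)
  also have "\<dots> \<le> norm A * norm e"
    using Cauchy_Schwarz_ineq2[of A e] by linarith
  also have "\<dots> \<le> norm A * (M * \<theta>\<^sup>2 * (norm \<xi>)\<^sup>2)"
  proof (rule mult_left_mono)
    show "norm e \<le> M * \<theta>\<^sup>2 * (norm \<xi>)\<^sup>2"
      using Mbound[rule_format, OF a \<theta>\<xi>] \<open>\<theta> > 0\<close>
      by (simp add: e_def power_mult_distrib mult_ac)
  qed simp
  finally have "\<theta> * inner A \<xi> \<le> \<theta> * (\<theta> * (norm A * M * (norm \<xi>)\<^sup>2))"
    by (simp add: power2_eq_square mult_ac)
  then show "inner A \<xi> \<le> \<theta> * (norm A * M * (norm \<xi>)\<^sup>2)"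
    using \<open>\<theta> > 0\<close> by simp
qed

lemma polar_form_if_maximizer:
  fixes A a :: "real^'r^'d" and R :: "real^'r^'d \<Rightarrow> real^'r^'d \<Rightarrow> real^'r^'d"
  assumes a: "a \<in> stiefel" and max: "\<And>z. z \<in> stiefel \<Longrightarrow> inner A z \<le> inner A a"
    and retr: "is_retraction R"
    and Mbound: "\<forall>x\<in>stiefel. \<forall>\<xi>\<in>tangent_space x. norm (R x \<xi> - (x + \<xi>)) \<le> M * (norm \<xi>)\<^sup>2"
  shows "A = a ** (transpose a ** A)" and "transpose (transpose a ** A) = transpose a ** A"
proof -
  have normal: "inner A \<xi> = 0" if "\<xi> \<in> tangent_space a" for \<xi>
    using inner_tangent_nonpos_if_maximizer[OF a max retr Mbound that]
      inner_tangent_nonpos_if_maximizer[OF a max retr Mbound tangent_space_scaleR[OF that, of "-1"]]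
    by simp
  let ?K = "(1/2) *\<^sub>R (transpose a ** A + transpose A ** a)"
  have K: "transpose ?K = ?K"
    by (simp add: transpose_scalar transpose_add matrix_transpose_mul add.commute)
  let ?p = "proj_tangent a A"
  have p: "?p \<in> tangent_space a"
    by (rule proj_tangent_in_tangent_space[OF a])
  have "inner ?p ?p = inner A ?p - inner (a ** ?K) ?p"
    by (subst (2) proj_tangent_decomp[of A a]) (simp add: inner_add_left)
  also have "\<dots> = 0"
    using normal[OF p] inner_tangent_symmetric[OF p K] by (simp add: inner_commute)
  finally have AK: "A = a ** ?K"
    using proj_tangent_decomp[of A a] by simp
  have "transpose a ** A = ?K"
    using arg_cong[OF AK, of "\<lambda>B. transpose a ** B"]
    by (simp add: matrix_mul_assoc stiefelD[OF a])
  with AK K show "A = a ** (transpose a ** A)" "transpose (transpose a ** A) = transpose a ** A"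
    by simp_all
qed

lemma norm_arith_mean_stiefel_mult_vec_le:
  fixes x :: "'n::finite \<Rightarrow> real^'r^'d"
  assumes xs: "\<forall>i. x i \<in> stiefel"
  shows "norm (arith_mean x *v v) \<le> norm v"
proof -
  let ?n = "real CARD('n)"
  have "norm (arith_mean x *v v) = (1 / ?n) * norm (\<Sum>i\<in>UNIV. x i *v v)"
    by (simp add: arith_mean_def matrix_vector_mult_sum_rdistrib flip: scaleR_matrix_vector_assoc)
  also have "\<dots> \<le> (1 / ?n) * (\<Sum>i\<in>UNIV. norm (x i *v v))"
    by (intro mult_left_mono norm_sum) simp
  also have "\<dots> = norm v"
    using xs by (simp add: norm_stiefel_mult_vec)
  finally show ?thesis .
qed

text \<open>In the Loewner order the conclusion says \<open>S \<ge> (1 - D/(2n)) I\<close>, where D is the sum of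
  squared distances to a: the matrix \<open>I - S\<close> is positive semidefinite, because S is a
  contraction, and has trace \<open>D/(2n)\<close>.\<close>

lemma polar_factor_lower_bound:
  fixes x :: "'n::finite \<Rightarrow> real^'r^'d" and a :: "real^'r^'d" and S :: "real^'r^'r"
  assumes a: "a \<in> stiefel" and xs: "\<forall>i. x i \<in> stiefel"
    and polar: "arith_mean x = a ** S" and S: "transpose S = S"
  shows "(1 - sum_sq_dist x a / (2 * real CARD('n))) * (norm Y)\<^sup>2 \<le> inner S (transpose Y ** Y)"
proof -
  let ?n = "real CARD('n)"
  have contraction: "norm (S *v v) \<le> norm v" for v
    using norm_arith_mean_stiefel_mult_vec_le[OF xs, of v]
    by (simp add: polar norm_stiefel_mult_vec[OF a] flip: matrix_vector_mul_assoc)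
  define P where "P = mat 1 - S"
  have Psym: "transpose P = P"
    using S by (simp add: P_def transpose_diff)
  have Ppsd: "0 \<le> inner v (P *v v)" for v
  proof -
    have "inner v (S *v v) \<le> norm v * norm (S *v v)"
      by (rule norm_cauchy_schwarz)
    also have "\<dots> \<le> norm v * norm v"
      by (rule mult_left_mono[OF contraction]) simp
    finally have "inner v (S *v v) \<le> norm v * norm v" .
    then show ?thesis
      by (simp add: P_def matrix_vector_mult_diff_rdistrib inner_diff_right
          flip: power2_eq_square power2_norm_eq_inner)
  qed
  have "trace S = inner (arith_mean x) a"
    using inner_matrix_mult_left[of a S a]
    by (simp add: polar stiefelD[OF a] inner_commute[of S] inner_mat1_eq_trace)
  then have trP: "trace P = sum_sq_dist x a / (2 * ?n)"
    by (simp add: P_def trace_sub trace_I sum_sq_dist_stiefel[OF xs a])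
  have "inner P (transpose Y ** Y) = (\<Sum>k\<in>UNIV. inner (Y$k) (P *v Y$k))"
    by (rule inner_transpose_mult_self)
  also have "\<dots> \<le> (\<Sum>k\<in>UNIV. trace P * (norm (Y$k))\<^sup>2)"
    by (intro sum_mono psd_quadratic_le_trace[OF Psym Ppsd])
  also have "\<dots> = trace P * (norm Y)\<^sup>2"
    by (simp add: norm_power2_rows[of Y] sum_distrib_left)
  finally have "inner P (transpose Y ** Y) \<le> trace P * (norm Y)\<^sup>2" .
  moreover have "inner S (transpose Y ** Y) = (norm Y)\<^sup>2 - inner P (transpose Y ** Y)"
    by (simp add: P_def inner_diff_left inner_mat1_eq_trace trace_transpose_mult_self)
  ultimately show ?thesis
    by (simp add: trP algebra_simps)
qed

lemma inner_polar_diff_ge: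
  fixes a b :: "real^'r^'d" and S T :: "real^'r^'r"
  assumes a: "a \<in> stiefel" and b: "b \<in> stiefel"
    and S: "transpose S = S" and T: "transpose T = T"
    and S_ge: "\<And>Y::real^'r^'d. s * (norm Y)\<^sup>2 \<le> inner S (transpose Y ** Y)"
    and T_ge: "\<And>Y::real^'r^'d. s * (norm Y)\<^sup>2 \<le> inner T (transpose Y ** Y)"
  shows "s * (norm (a - b))\<^sup>2 \<le> inner (a ** S - b ** T) (a - b)"
proof -
  have "s / 2 * (norm (a - b))\<^sup>2 \<le> inner (a ** S) (a - b)"
    using inner_stiefel_mult_diff[OF a b S] S_ge[of "a - b"] by simp
  moreover have "s / 2 * (norm (a - b))\<^sup>2 \<le> inner (b ** T) (b - a)"
    using inner_stiefel_mult_diff[OF b a T] T_ge[of "b - a"] by (simp add: norm_minus_commute)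
  moreover have "inner (a ** S - b ** T) (a - b) = inner (a ** S) (a - b) + inner (b ** T) (b - a)"
    by (simp add: inner_diff_left inner_diff_right)
  ultimately show ?thesis
    by (simp add: field_simps)
qed

lemma iam_arith_mean_polar_form:
  fixes x :: "'n::finite \<Rightarrow> real^'r^'d" and R :: "real^'r^'d \<Rightarrow> real^'r^'d \<Rightarrow> real^'r^'d"
  assumes iam: "is_IAM x a" and N1: "in_N1 \<delta> x a"
    and retr: "is_retraction R"
    and Mbound: "\<forall>x\<in>stiefel. \<forall>\<xi>\<in>tangent_space x. norm (R x \<xi> - (x + \<xi>)) \<le> M * (norm \<xi>)\<^sup>2"
  obtains S where "arith_mean x = a ** S" and "transpose S = S"
    and "\<And>Y::real^'r^'d. (1 - \<delta>\<^sup>2 / 2) * (norm Y)\<^sup>2 \<le> inner S (transpose Y ** Y)"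
proof -
  have a: "a \<in> stiefel" and xs: "\<forall>i. x i \<in> stiefel"
    using iam N1 by (simp_all add: is_IAM_def in_N1_def)
  let ?S = "transpose a ** arith_mean x"
  have polar: "arith_mean x = a ** ?S" and S: "transpose ?S = ?S"
    using polar_form_if_maximizer[OF a iam_maximizes_inner_arith_mean[OF iam xs] retr Mbound]
    by simp_all
  have "(1 - \<delta>\<^sup>2 / 2) * (norm Y)\<^sup>2 \<le> inner ?S (transpose Y ** Y)" for Y :: "real^'r^'d"
  proof -
    have "1 - \<delta>\<^sup>2 / 2 \<le> 1 - sum_sq_dist x a / (2 * real CARD('n))"
      using N1 by (simp add: in_N1_def sum_sq_dist_def field_simps)
    then have "(1 - \<delta>\<^sup>2 / 2) * (norm Y)\<^sup>2
        \<le> (1 - sum_sq_dist x a / (2 * real CARD('n))) * (norm Y)\<^sup>2"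
      by (rule mult_right_mono) simp
    also have "\<dots> \<le> inner ?S (transpose Y ** Y)"
      by (rule polar_factor_lower_bound[OF a xs polar S])
    finally show ?thesis .
  qed
  with polar S show thesis
    by (rule that)
qed

lemma iam_dist_le_arith_mean_dist:
  fixes x y :: "'n::finite \<Rightarrow> real^'r^'d" and R :: "real^'r^'d \<Rightarrow> real^'r^'d \<Rightarrow> real^'r^'d"
  assumes iam_x: "is_IAM x a" and iam_y: "is_IAM y b"
    and N1_x: "in_N1 \<delta> x a" and N1_y: "in_N1 \<delta> y b"
    and retr: "is_retraction R"
    and Mbound: "\<forall>x\<in>stiefel. \<forall>\<xi>\<in>tangent_space x. norm (R x \<xi> - (x + \<xi>)) \<le> M * (norm \<xi>)\<^sup>2"
  shows "(1 - \<delta>\<^sup>2 / 2) * norm (a - b) \<le> norm (arith_mean x - arith_mean y)"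
proof -
  obtain S where Sx: "arith_mean x = a ** S" "transpose S = S"
    and S_ge: "\<And>Y::real^'r^'d. (1 - \<delta>\<^sup>2 / 2) * (norm Y)\<^sup>2 \<le> inner S (transpose Y ** Y)"
    using iam_arith_mean_polar_form[OF iam_x N1_x retr Mbound] by blast
  obtain T where Ty: "arith_mean y = b ** T" "transpose T = T"
    and T_ge: "\<And>Y::real^'r^'d. (1 - \<delta>\<^sup>2 / 2) * (norm Y)\<^sup>2 \<le> inner T (transpose Y ** Y)"
    using iam_arith_mean_polar_form[OF iam_y N1_y retr Mbound] by blast
  have ab: "a \<in> stiefel" "b \<in> stiefel"
    using iam_x iam_y by (simp_all add: is_IAM_def)
  have "(1 - \<delta>\<^sup>2 / 2) * (norm (a - b))\<^sup>2 \<le> inner (arith_mean x - arith_mean y) (a - b)"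
    using inner_polar_diff_ge[OF ab Sx(2) Ty(2) S_ge T_ge] by (simp add: Sx(1) Ty(1))
  also have "\<dots> \<le> norm (arith_mean x - arith_mean y) * norm (a - b)"
    by (rule norm_cauchy_schwarz)
  finally show ?thesis
    by (cases "a = b") (simp_all add: power2_eq_square)
qed

section \<open>The consensus operator of a symmetric stochastic matrix\<close>

definition laplacian :: "real^'n^'n \<Rightarrow> ('n::finite \<Rightarrow> 'a::real_vector) \<Rightarrow> 'n \<Rightarrow> 'a" where
  "laplacian T z i = z i - (\<Sum>j\<in>UNIV. T$i$j *\<^sub>R z j)"

definition laplacian_form :: "real^'n^'n \<Rightarrow> ('n::finite \<Rightarrow> 'a::real_inner) \<Rightarrow> ('n \<Rightarrow> 'a) \<Rightarrow> real" where
  "laplacian_form T u v = (\<Sum>i\<in>UNIV. inner (u i) (laplacian T v i))"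

lemma laplacian_form_expand:
  "laplacian_form T u v = (\<Sum>i\<in>UNIV. inner (u i) (v i)) - (\<Sum>i\<in>UNIV. \<Sum>j\<in>UNIV. T$i$j * inner (u i) (v j))"
  by (simp add: laplacian_form_def laplacian_def inner_diff_right inner_sum_right sum_subtractf)

lemma laplacian_form_add_scaleR_left:
  "laplacian_form T (\<lambda>i. u i + t *\<^sub>R v i) w = laplacian_form T u w + t * laplacian_form T v w"
  by (simp add: laplacian_form_def inner_add_left sum.distrib sum_distrib_left)

locale symmetric_stochastic_matrix =
  fixes T :: "real^'n::finite^'n"
  assumes symmetric: "transpose T = T"
    and row_sum: "\<And>i. (\<Sum>j\<in>UNIV. T$i$j) = 1"
    and nonneg: "\<And>i j. 0 \<le> T$i$j"
begin

lemma entry_commute: "T$i$j = T$j$i"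
  by (metis symmetric transpose_def vec_lambda_beta)

lemma column_sum: "(\<Sum>i\<in>UNIV. T$i$j) = 1"
  using row_sum[of j] by (simp add: entry_commute)

lemma laplacian_eq_sum_diff: "laplacian T x i = (\<Sum>j\<in>UNIV. T$i$j *\<^sub>R (x i - x j))"
  by (simp add: laplacian_def scaleR_diff_right sum_subtractf row_sum flip: scaleR_sum_left)

lemma laplacian_translate: "laplacian T (\<lambda>i. x i - a) = laplacian T x"
  by (simp add: fun_eq_iff laplacian_eq_sum_diff)

lemma sum_laplacian_eq_0: "(\<Sum>i\<in>UNIV. laplacian T x i) = 0"
proof -
  have "(\<Sum>i\<in>UNIV. \<Sum>j\<in>UNIV. T$i$j *\<^sub>R x j) = (\<Sum>j\<in>UNIV. \<Sum>i\<in>UNIV. T$i$j *\<^sub>R x j)"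
    by (rule sum.swap)
  also have "\<dots> = (\<Sum>j\<in>UNIV. x j)"
    by (simp add: column_sum flip: scaleR_sum_left)
  finally show ?thesis
    by (simp add: laplacian_def sum_subtractf)
qed

lemma laplacian_form_commute: "laplacian_form T u v = laplacian_form T v u"
proof -
  have "(\<Sum>i\<in>UNIV. \<Sum>j\<in>UNIV. T$i$j * inner (u i) (v j))
      = (\<Sum>j\<in>UNIV. \<Sum>i\<in>UNIV. T$j$i * inner (v j) (u i))"
    by (subst sum.swap) (simp add: entry_commute inner_commute)
  then show ?thesis
    by (simp add: laplacian_form_expand inner_commute)
qed

lemma laplacian_form_self:
  "laplacian_form T v v = 1/2 * (\<Sum>i\<in>UNIV. \<Sum>j\<in>UNIV. T$i$j * (norm (v i - v j))\<^sup>2)"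
proof -
  have expand: "(norm (v i - v j))\<^sup>2 = (norm (v i))\<^sup>2 - 2 * inner (v i) (v j) + (norm (v j))\<^sup>2"
    for i j
    by (simp add: power2_norm_eq_inner inner_diff_left inner_diff_right inner_commute)
  have "(\<Sum>i\<in>UNIV. \<Sum>j\<in>UNIV. T$i$j * (norm (v i - v j))\<^sup>2)
     = (\<Sum>i\<in>UNIV. \<Sum>j\<in>UNIV. T$i$j * (norm (v i))\<^sup>2)
       - 2 * (\<Sum>i\<in>UNIV. \<Sum>j\<in>UNIV. T$i$j * inner (v i) (v j))
       + (\<Sum>i\<in>UNIV. \<Sum>j\<in>UNIV. T$i$j * (norm (v j))\<^sup>2)"
    by (simp add: expand algebra_simps sum.distrib sum_subtractf sum_distrib_left)
  moreover have "(\<Sum>i\<in>UNIV. \<Sum>j\<in>UNIV. T$i$j * (norm (v i))\<^sup>2) = (\<Sum>i\<in>UNIV. (norm (v i))\<^sup>2)"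
    by (simp add: row_sum flip: sum_distrib_right)
  moreover have "(\<Sum>i\<in>UNIV. \<Sum>j\<in>UNIV. T$i$j * (norm (v j))\<^sup>2) = (\<Sum>j\<in>UNIV. (norm (v j))\<^sup>2)"
    by (subst sum.swap) (simp add: column_sum flip: sum_distrib_right)
  ultimately show ?thesis
    by (simp add: laplacian_form_expand power2_norm_eq_inner)
qed

lemma laplacian_form_nonneg: "0 \<le> laplacian_form T v v"
  unfolding laplacian_form_self using nonneg by (simp add: sum_nonneg)

lemma laplacian_form_translate:
  "laplacian_form T (\<lambda>i. v i - a) (\<lambda>i. v i - a) = laplacian_form T v v"
  by (simp add: laplacian_form_self)

text \<open>Coordinatewise along an orthonormal basis, the form is \<open>w\<^sup>T (I - T) w\<close> on vectors w
  indexed by the nodes, and the smallest eigenvalue of T bounds \<open>w\<^sup>T T w\<close> from below.\<close>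

lemma laplacian_form_le:
  fixes v :: "'n \<Rightarrow> 'a::euclidean_space"
  shows "laplacian_form T v v \<le> (1 - min_eigenvalue T) * (\<Sum>i\<in>UNIV. (norm (v i))\<^sup>2)"
proof -
  define w where "w b = (\<chi> i. inner (v i) b)" for b
  have cross: "(\<Sum>i\<in>UNIV. \<Sum>j\<in>UNIV. T$i$j * inner (v i) (v j)) = (\<Sum>b\<in>Basis. inner (w b) (T *v w b))"
  proof -
    have "(\<Sum>i\<in>UNIV. \<Sum>j\<in>UNIV. T$i$j * inner (v i) (v j))
        = (\<Sum>i\<in>UNIV. \<Sum>j\<in>UNIV. \<Sum>b\<in>Basis. inner (v i) b * (T$i$j * inner (v j) b))"
      by (simp add: euclidean_inner[of "v _" "v _"] sum_distrib_left mult_ac)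
    also have "\<dots> = (\<Sum>i\<in>UNIV. \<Sum>b\<in>Basis. \<Sum>j\<in>UNIV. inner (v i) b * (T$i$j * inner (v j) b))"
      by (intro sum.cong refl) (rule sum.swap)
    also have "\<dots> = (\<Sum>b\<in>Basis. \<Sum>i\<in>UNIV. \<Sum>j\<in>UNIV. inner (v i) b * (T$i$j * inner (v j) b))"
      by (rule sum.swap)
    also have "\<dots> = (\<Sum>b\<in>Basis. inner (w b) (T *v w b))"
      by (simp add: w_def inner_vec_def matrix_vector_mult_def sum_distrib_left)
    finally show ?thesis .
  qed
  have squares: "(\<Sum>i\<in>UNIV. (norm (v i))\<^sup>2) = (\<Sum>b\<in>Basis. (norm (w b))\<^sup>2)"
  proof -
    have "(\<Sum>i\<in>UNIV. (norm (v i))\<^sup>2) = (\<Sum>i\<in>UNIV. \<Sum>b\<in>Basis. inner (v i) b * inner (v i) b)"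
      by (simp add: power2_norm_eq_inner euclidean_inner[of "v _" "v _"])
    also have "\<dots> = (\<Sum>b\<in>Basis. \<Sum>i\<in>UNIV. inner (v i) b * inner (v i) b)"
      by (rule sum.swap)
    also have "\<dots> = (\<Sum>b\<in>Basis. (norm (w b))\<^sup>2)"
      by (simp add: power2_norm_eq_inner inner_vec_def w_def)
    finally show ?thesis .
  qed
  have "min_eigenvalue T * (\<Sum>i\<in>UNIV. (norm (v i))\<^sup>2)
      = (\<Sum>b\<in>Basis. min_eigenvalue T * (norm (w b))\<^sup>2)"
    by (simp add: squares sum_distrib_left)
  also have "\<dots> \<le> (\<Sum>b\<in>Basis. inner (w b) (T *v w b))"
    by (intro sum_mono min_eigenvalue_le_rayleigh symmetric)
  finally have "min_eigenvalue T * (\<Sum>i\<in>UNIV. (norm (v i))\<^sup>2) \<le> (\<Sum>b\<in>Basis. inner (w b) (T *v w b))" .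
  moreover have "laplacian_form T v v = (\<Sum>i\<in>UNIV. (norm (v i))\<^sup>2) - (\<Sum>b\<in>Basis. inner (w b) (T *v w b))"
    by (simp add: laplacian_form_expand cross power2_norm_eq_inner)
  ultimately show ?thesis
    by (simp add: left_diff_distrib)
qed

lemma laplacian_form_add_scaleR_right:
  "laplacian_form T w (\<lambda>i. u i + t *\<^sub>R v i) = laplacian_form T w u + t * laplacian_form T w v"
  by (simp add: laplacian_form_commute[of w] laplacian_form_add_scaleR_left)

lemma laplacian_form_cauchy_schwarz:
  "(laplacian_form T u v)\<^sup>2 \<le> laplacian_form T u u * laplacian_form T v v"
proof (rule discriminant_le_if_quadratic_nonneg[OF laplacian_form_nonneg])
  fix t :: real
  let ?w = "\<lambda>i. u i + t *\<^sub>R v i"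
  have "laplacian_form T ?w ?w
      = laplacian_form T u u + 2 * laplacian_form T u v * t + laplacian_form T v v * t\<^sup>2"
    by (simp add: laplacian_form_add_scaleR_left laplacian_form_add_scaleR_right
        laplacian_form_commute[of v u] power2_eq_square algebra_simps)
  then show "0 \<le> laplacian_form T u u + 2 * laplacian_form T u v * t + laplacian_form T v v * t\<^sup>2"
    using laplacian_form_nonneg[of ?w] by simp
qed

lemma sum_norm_laplacian_le:
  fixes z :: "'n \<Rightarrow> 'a::euclidean_space"
  shows "(\<Sum>i\<in>UNIV. (norm (laplacian T z i))\<^sup>2) \<le> (1 - min_eigenvalue T)\<^sup>2 * (\<Sum>i\<in>UNIV. (norm (z i))\<^sup>2)"
proof -
  let ?L = "1 - min_eigenvalue T"
  let ?N = "\<Sum>i\<in>UNIV. (norm (laplacian T z i))\<^sup>2"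
  let ?Z = "\<Sum>i\<in>UNIV. (norm (z i))\<^sup>2"
  have N: "?N = laplacian_form T (laplacian T z) z"
    by (simp add: laplacian_form_commute[of _ z] laplacian_form_def power2_norm_eq_inner)
  have "?N\<^sup>2 \<le> laplacian_form T z z * laplacian_form T (laplacian T z) (laplacian T z)"
    unfolding N by (subst mult.commute) (rule laplacian_form_cauchy_schwarz)
  also have "\<dots> \<le> (?L * ?Z) * (?L * ?N)"
  proof (rule mult_mono)
    show "0 \<le> ?L * ?Z"
      using laplacian_form_nonneg[of z] laplacian_form_le[of z] by linarith
  qed (simp_all add: laplacian_form_le laplacian_form_nonneg)
  finally have "?N * ?N \<le> (?L\<^sup>2 * ?Z) * ?N"
    by (simp add: power2_eq_square mult_ac)
  moreover have "?N \<ge> 0"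
    by (simp add: sum_nonneg)
  ultimately show ?thesis
    by (cases "?N = 0") (simp_all add: sum_nonneg)
qed

text \<open>Summing the projected consensus directions leaves only the normal parts, and
  \<open>x\<^sub>i\<^sup>T g\<^sub>i + g\<^sub>i\<^sup>T x\<^sub>i = \<Sum>\<^sub>j T\<^sub>i\<^sub>j (x\<^sub>i - x\<^sub>j)\<^sup>T (x\<^sub>i - x\<^sub>j)\<close>
  for \<open>g\<^sub>i\<close> the i-th row of the Laplacian, because the \<open>x\<^sub>i\<close> lie on the Stiefel manifold.\<close>

lemma norm_sum_proj_laplacian_le:
  fixes x :: "'n \<Rightarrow> real^'r^'d"
  assumes xs: "\<forall>i. x i \<in> stiefel"
  shows "norm (\<Sum>i\<in>UNIV. proj_tangent (x i) (laplacian T x i)) \<le> laplacian_form T x x"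
proof -
  define N where "N i = transpose (x i) ** laplacian T x i + transpose (laplacian T x i) ** x i" for i
  have N_eq: "N i = (\<Sum>j\<in>UNIV. T$i$j *\<^sub>R (transpose (x i - x j) ** (x i - x j)))" for i
  proof -
    have "N i = (\<Sum>j\<in>UNIV. T$i$j *\<^sub>R (transpose (x i) ** (x i - x j) + transpose (x i - x j) ** x i))"
      by (simp add: N_def laplacian_eq_sum_diff matrix_sum_ldistrib matrix_sum_rdistrib transpose_sum
          transpose_scalar matrix_scalar_ac scaleR_add_right sum.distrib flip: scalar_matrix_assoc)
    then show ?thesis
      using xs by (simp add: stiefel_transpose_mult_diff)
  qed
  have norm_N: "norm (N i) \<le> (\<Sum>j\<in>UNIV. T$i$j * (norm (x i - x j))\<^sup>2)" for i
  proof -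
    have "norm (N i) \<le> (\<Sum>j\<in>UNIV. norm (T$i$j *\<^sub>R (transpose (x i - x j) ** (x i - x j))))"
      unfolding N_eq by (rule norm_sum)
    also have "\<dots> \<le> (\<Sum>j\<in>UNIV. T$i$j * (norm (x i - x j))\<^sup>2)"
    proof (rule sum_mono)
      fix j
      have "norm (transpose (x i - x j) ** (x i - x j)) \<le> (norm (x i - x j))\<^sup>2"
        using norm_matrix_mult_le[of "transpose (x i - x j)" "x i - x j"]
        by (simp add: power2_eq_square)
      then show "norm (T$i$j *\<^sub>R (transpose (x i - x j) ** (x i - x j))) \<le> T$i$j * (norm (x i - x j))\<^sup>2"
        using nonneg[of i j] by (simp add: mult_left_mono)
    qed
    finally show ?thesis .
  qed
  have "(\<Sum>i\<in>UNIV. proj_tangent (x i) (laplacian T x i))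
      = (\<Sum>i\<in>UNIV. laplacian T x i) - (1/2) *\<^sub>R (\<Sum>i\<in>UNIV. x i ** N i)"
    by (simp add: proj_tangent_def N_def sum_subtractf matrix_scalar_ac scaleR_sum_right
        flip: scalar_matrix_assoc)
  then have "norm (\<Sum>i\<in>UNIV. proj_tangent (x i) (laplacian T x i)) = 1/2 * norm (\<Sum>i\<in>UNIV. x i ** N i)"
    by (simp add: sum_laplacian_eq_0)
  also have "\<dots> \<le> 1/2 * (\<Sum>i\<in>UNIV. norm (N i))"
    using xs by (simp add: norm_stiefel_mult order_trans[OF norm_sum])
  also have "\<dots> \<le> 1/2 * (\<Sum>i\<in>UNIV. \<Sum>j\<in>UNIV. T$i$j * (norm (x i - x j))\<^sup>2)"
    by (simp add: sum_mono norm_N)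
  also have "\<dots> = laplacian_form T x x"
    by (simp add: laplacian_form_self)
  finally show ?thesis .
qed

lemma norm_sum_proj_laplacian_le_sum_sq_dist:
  fixes x :: "'n \<Rightarrow> real^'r^'d"
  assumes xs: "\<forall>i. x i \<in> stiefel"
  shows "norm (\<Sum>i\<in>UNIV. proj_tangent (x i) (laplacian T x i)) \<le> (1 - min_eigenvalue T) * sum_sq_dist x a"
proof -
  have "norm (\<Sum>i\<in>UNIV. proj_tangent (x i) (laplacian T x i)) \<le> laplacian_form T x x"
    by (rule norm_sum_proj_laplacian_le[OF xs])
  also have "\<dots> = laplacian_form T (\<lambda>i. x i - a) (\<lambda>i. x i - a)"
    by (rule laplacian_form_translate[symmetric])
  also have "\<dots> \<le> (1 - min_eigenvalue T) * sum_sq_dist x a"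
    unfolding sum_sq_dist_def by (rule laplacian_form_le)
  finally show ?thesis .
qed

lemma sum_norm_proj_laplacian_le_sum_sq_dist:
  fixes x :: "'n \<Rightarrow> real^'r^'d"
  assumes xs: "\<forall>i. x i \<in> stiefel"
  shows "(\<Sum>i\<in>UNIV. (norm (proj_tangent (x i) (laplacian T x i)))\<^sup>2)
    \<le> (1 - min_eigenvalue T)\<^sup>2 * sum_sq_dist x a"
proof -
  have "(\<Sum>i\<in>UNIV. (norm (proj_tangent (x i) (laplacian T x i)))\<^sup>2)
      \<le> (\<Sum>i\<in>UNIV. (norm (laplacian T (\<lambda>i. x i - a) i))\<^sup>2)"
    by (intro sum_mono power_mono) (simp_all add: laplacian_translate norm_proj_tangent_le xs)
  also have "\<dots> \<le> (1 - min_eigenvalue T)\<^sup>2 * sum_sq_dist x a"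
    unfolding sum_sq_dist_def by (rule sum_norm_laplacian_le)
  finally show ?thesis .
qed

end

lemma symmetric_stochastic_matrix_matpow:
  fixes W :: "real^'n::finite^'n"
  assumes "symmetric_stochastic_matrix W"
  shows "symmetric_stochastic_matrix (matpow W k)"
proof (induction k)
  case 0
  show ?case
  proof unfold_locales
    fix i j :: 'n
    have "mat 1 $ i $ j = (if i = j then 1 else 0 :: real)" for j
      by (simp add: mat_def)
    then show "(\<Sum>j\<in>UNIV. matpow W 0 $ i $ j) = 1" "0 \<le> matpow W 0 $ i $ j"
      by simp_all
  qed simp
next
  case (Suc k)
  interpret W: symmetric_stochastic_matrix W by (fact assms)
  interpret Wk: symmetric_stochastic_matrix "matpow W k" by (fact Suc)
  have comm: "W ** matpow W k = matpow W k ** W"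
    by (induction k) (simp_all add: matrix_mul_assoc)
  show ?case
  proof unfold_locales
    show "transpose (matpow W (Suc k)) = matpow W (Suc k)"
      by (simp add: matrix_transpose_mul W.symmetric Wk.symmetric comm)
    show "(\<Sum>j\<in>UNIV. matpow W (Suc k) $ i $ j) = 1" for i
    proof -
      have "(\<Sum>j\<in>UNIV. matpow W (Suc k) $ i $ j) = (\<Sum>l\<in>UNIV. W$i$l * (\<Sum>j\<in>UNIV. matpow W k $ l $ j))"
        by (simp add: matrix_matrix_mult_def sum_distrib_left) (rule sum.swap)
      then show ?thesis
        by (simp add: Wk.row_sum W.row_sum)
    qed
    show "0 \<le> matpow W (Suc k) $ i $ j" for i j
      by (simp add: matrix_matrix_mult_def W.nonneg Wk.nonneg sum_nonneg)
  qed
qed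

section \<open>One step of the perturbed consensus iteration\<close>

lemma norm_add_power2_le: "(norm (x + y))\<^sup>2 \<le> 2 * (norm x)\<^sup>2 + 2 * (norm y)\<^sup>2"
  for x y :: "'a::real_normed_vector"
proof -
  have "(norm (x + y))\<^sup>2 \<le> (norm x + norm y)\<^sup>2"
    by (simp add: norm_triangle_ineq power_mono)
  also have "\<dots> \<le> 2 * (norm x)\<^sup>2 + 2 * (norm y)\<^sup>2"
    using sum_squares_bound[of "norm x" "norm y"] by (simp add: power2_eq_square algebra_simps)
  finally show ?thesis .
qed

lemma sum_norm_retraction_error_le:
  fixes x g u :: "'n::finite \<Rightarrow> real^'r^'d" and R :: "real^'r^'d \<Rightarrow> real^'r^'d \<Rightarrow> real^'r^'d"
  assumes Mbound: "\<forall>x\<in>stiefel. \<forall>\<xi>\<in>tangent_space x. norm (R x \<xi> - (x + \<xi>)) \<le> M * (norm \<xi>)\<^sup>2"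
    and M: "0 \<le> M" and xs: "\<forall>i. x i \<in> stiefel"
    and g: "\<forall>i. g i \<in> tangent_space (x i)" and u: "\<forall>i. u i \<in> tangent_space (x i)"
  shows "(\<Sum>i\<in>UNIV. norm (R (x i) (a *\<^sub>R g i + b *\<^sub>R u i) - (x i + (a *\<^sub>R g i + b *\<^sub>R u i))))
    \<le> 2 * M * a\<^sup>2 * (\<Sum>i\<in>UNIV. (norm (g i))\<^sup>2) + 2 * M * b\<^sup>2 * (\<Sum>i\<in>UNIV. (norm (u i))\<^sup>2)"
proof -
  have "norm (R (x i) (a *\<^sub>R g i + b *\<^sub>R u i) - (x i + (a *\<^sub>R g i + b *\<^sub>R u i)))
      \<le> 2 * M * a\<^sup>2 * (norm (g i))\<^sup>2 + 2 * M * b\<^sup>2 * (norm (u i))\<^sup>2" for i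
  proof -
    have "a *\<^sub>R g i + b *\<^sub>R u i \<in> tangent_space (x i)"
      using g u by (simp add: tangent_space_add tangent_space_scaleR)
    then have "norm (R (x i) (a *\<^sub>R g i + b *\<^sub>R u i) - (x i + (a *\<^sub>R g i + b *\<^sub>R u i)))
        \<le> M * (norm (a *\<^sub>R g i + b *\<^sub>R u i))\<^sup>2"
      using Mbound xs by simp
    also have "\<dots> \<le> M * (2 * (norm (a *\<^sub>R g i))\<^sup>2 + 2 * (norm (b *\<^sub>R u i))\<^sup>2)"
      by (rule mult_left_mono[OF norm_add_power2_le M])
    also have "\<dots> = 2 * M * a\<^sup>2 * (norm (g i))\<^sup>2 + 2 * M * b\<^sup>2 * (norm (u i))\<^sup>2"
      by (simp add: power_mult_distrib algebra_simps)
    finally show ?thesis .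
  qed
  then have "(\<Sum>i\<in>UNIV. norm (R (x i) (a *\<^sub>R g i + b *\<^sub>R u i) - (x i + (a *\<^sub>R g i + b *\<^sub>R u i))))
      \<le> (\<Sum>i\<in>UNIV. 2 * M * a\<^sup>2 * (norm (g i))\<^sup>2 + 2 * M * b\<^sup>2 * (norm (u i))\<^sup>2)"
    by (intro sum_mono)
  also have "\<dots> = 2 * M * a\<^sup>2 * (\<Sum>i\<in>UNIV. (norm (g i))\<^sup>2) + 2 * M * b\<^sup>2 * (\<Sum>i\<in>UNIV. (norm (u i))\<^sup>2)"
    by (simp add: sum.distrib sum_distrib_left)
  finally show ?thesis .
qed

text \<open>The Euclidean mean moves by the average of \<open>\<alpha> g\<^sub>i - \<beta> u\<^sub>i - e\<^sub>i\<close>, the \<open>e\<^sub>i\<close> being the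
  retraction errors; the sum of the projected consensus directions \<open>g\<^sub>i\<close> is of second order
  in the consensus error.\<close>

lemma (in symmetric_stochastic_matrix) arith_mean_step_bound:
  fixes x y u :: "'n \<Rightarrow> real^'r^'d" and R :: "real^'r^'d \<Rightarrow> real^'r^'d \<Rightarrow> real^'r^'d"
  defines "L \<equiv> 1 - min_eigenvalue T"
  assumes Mbound: "\<forall>x\<in>stiefel. \<forall>\<xi>\<in>tangent_space x. norm (R x \<xi> - (x + \<xi>)) \<le> M * (norm \<xi>)\<^sup>2"
    and M: "M > 0" and xs: "\<forall>i. x i \<in> stiefel" and u: "\<forall>i. u i \<in> tangent_space (x i)"
    and step: "\<forall>i. y i = R (x i) ((- \<alpha>) *\<^sub>R proj_tangent (x i) (laplacian T x i) + \<beta> *\<^sub>R u i)"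
    and \<alpha>: "0 \<le> \<alpha>" "\<alpha> \<le> 1 / M" and \<beta>: "0 \<le> \<beta>"
  shows "norm (arith_mean x - arith_mean y)
    \<le> (2 * L\<^sup>2 * \<alpha> + L * \<alpha>) / real CARD('n) * sum_sq_dist x a + \<beta> * norm (arith_mean u)
      + 2 * M * \<beta>\<^sup>2 / real CARD('n) * (\<Sum>i\<in>UNIV. (norm (u i))\<^sup>2)"
proof -
  let ?n = "real CARD('n)"
  define g where "g i = proj_tangent (x i) (laplacian T x i)" for i
  define e where "e i = y i - (x i + ((- \<alpha>) *\<^sub>R g i + \<beta> *\<^sub>R u i))" for i
  define D where "D = sum_sq_dist x a"
  define U where "U = (\<Sum>i\<in>UNIV. (norm (u i))\<^sup>2)"
  have g: "\<forall>i. g i \<in> tangent_space (x i)"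
    using xs by (simp add: g_def proj_tangent_in_tangent_space)
  have "M * \<alpha> \<le> 1"
    using \<alpha> M by (simp add: field_simps)
  then have "(M * \<alpha>) * \<alpha> \<le> 1 * \<alpha>"
    using \<alpha> by (intro mult_right_mono)
  then have "M * \<alpha>\<^sup>2 \<le> \<alpha>"
    by (simp add: power2_eq_square mult_ac)
  then have "2 * (M * \<alpha>\<^sup>2) * (\<Sum>i\<in>UNIV. (norm (g i))\<^sup>2) \<le> 2 * \<alpha> * (L\<^sup>2 * D)"
    using sum_norm_proj_laplacian_le_sum_sq_dist[OF xs, of a]
    using M by (intro mult_mono) (simp_all add: g_def L_def D_def sum_nonneg \<alpha>)
  moreover have "(\<Sum>i\<in>UNIV. norm (e i)) \<le> 2 * M * (- \<alpha>)\<^sup>2 * (\<Sum>i\<in>UNIV. (norm (g i))\<^sup>2) + 2 * M * \<beta>\<^sup>2 * U"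
    using sum_norm_retraction_error_le[OF Mbound _ xs g u, of "- \<alpha>" \<beta>] M step
    by (simp add: e_def g_def U_def)
  ultimately have e_sum: "(\<Sum>i\<in>UNIV. norm (e i)) \<le> 2 * \<alpha> * L\<^sup>2 * D + 2 * M * \<beta>\<^sup>2 * U"
    by (simp add: mult_ac)
  have g_sum: "norm (\<Sum>i\<in>UNIV. g i) \<le> L * D"
    unfolding g_def L_def D_def by (rule norm_sum_proj_laplacian_le_sum_sq_dist[OF xs])
  have "arith_mean x - arith_mean y
      = (1 / ?n) *\<^sub>R (\<alpha> *\<^sub>R (\<Sum>i\<in>UNIV. g i) - \<beta> *\<^sub>R (\<Sum>i\<in>UNIV. u i) - (\<Sum>i\<in>UNIV. e i))"
    by (simp add: arith_mean_def e_def algebra_simps sum_subtractf scaleR_sum_right sum.distrib)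
  moreover have "norm (\<alpha> *\<^sub>R (\<Sum>i\<in>UNIV. g i) - \<beta> *\<^sub>R (\<Sum>i\<in>UNIV. u i) - (\<Sum>i\<in>UNIV. e i))
      \<le> \<alpha> * norm (\<Sum>i\<in>UNIV. g i) + \<beta> * norm (\<Sum>i\<in>UNIV. u i) + (\<Sum>i\<in>UNIV. norm (e i))"
    using norm_triangle_ineq4[of "\<alpha> *\<^sub>R (\<Sum>i\<in>UNIV. g i) - \<beta> *\<^sub>R (\<Sum>i\<in>UNIV. u i)" "\<Sum>i\<in>UNIV. e i"]
      norm_triangle_ineq4[of "\<alpha> *\<^sub>R (\<Sum>i\<in>UNIV. g i)" "\<beta> *\<^sub>R (\<Sum>i\<in>UNIV. u i)"]
      norm_sum[of e UNIV] \<alpha> \<beta>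
    by simp
  ultimately have "norm (arith_mean x - arith_mean y)
      \<le> (1 / ?n) * (\<alpha> * norm (\<Sum>i\<in>UNIV. g i) + \<beta> * norm (\<Sum>i\<in>UNIV. u i) + (\<Sum>i\<in>UNIV. norm (e i)))"
    by (simp add: divide_right_mono)
  also have "\<dots> \<le> (1 / ?n) * (\<alpha> * (L * D) + \<beta> * norm (\<Sum>i\<in>UNIV. u i) + (2 * \<alpha> * L\<^sup>2 * D + 2 * M * \<beta>\<^sup>2 * U))"
    using g_sum e_sum \<alpha> \<beta> by (intro mult_left_mono add_mono) simp_all
  also have "\<dots> = (2 * L\<^sup>2 * \<alpha> + L * \<alpha>) / ?n * D + \<beta> * norm (arith_mean u) + 2 * M * \<beta>\<^sup>2 / ?n * U"
    using \<beta> by (simp add: arith_mean_def field_simps)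
  finally show ?thesis
    by (simp add: D_def U_def)
qed

lemma grad_phi_eq_proj_laplacian: "grad_phi W t x i = proj_tangent (x i) (laplacian (matpow W t) x i)"
  by (simp add: grad_phi_def laplacian_def)

theorem mainTheorem1:
  fixes W :: "real^'n::finite^'n"
    and R :: "real^'r::finite^'d::finite \<Rightarrow> real^'r^'d \<Rightarrow> real^'r^'d"
    and t :: nat
    and M \<delta>1 \<delta>2 \<alpha> \<beta> :: real
    and x0 x1 u :: "'n \<Rightarrow> real^'r^'d"
    and xbar0 xbar1 :: "real^'r^'d"
  assumes dr: "CARD('r) \<le> CARD('d)"
    and Wsym: "transpose W = W"
    and Wnonneg: "\<forall>i j. W $ i $ j \<ge> 0"
    and Wrow: "\<forall>i. (\<Sum>j\<in>UNIV. W $ i $ j) = 1"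
    and Wcol: "\<forall>j. (\<Sum>i\<in>UNIV. W $ i $ j) = 1"
    and t1: "t \<ge> 1"
    and retr: "is_retraction R"
    and Mpos: "M > 0"
    and Mbound: "\<forall>x\<in>stiefel. \<forall>\<xi>\<in>tangent_space x. norm (R x \<xi> - (x + \<xi>)) \<le> M * (norm \<xi>)\<^sup>2"
    and d1pos: "\<delta>1 > 0" and d2pos: "\<delta>2 > 0"
    and d1d2: "\<delta>1 \<le> \<delta>2 / (5 * sqrt (real CARD('r)))"
    and d2: "\<delta>2 \<le> 1/6"
    and iam0: "is_IAM x0 xbar0"
    and iam1: "is_IAM x1 xbar1"
    and N0: "in_N1 \<delta>1 x0 xbar0 \<and> in_N2 \<delta>2 x0 xbar0"
    and N1: "in_N1 \<delta>1 x1 xbar1"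
    and utan: "\<forall>i. u i \<in> tangent_space (x0 i)"
    and step: "\<forall>i. x1 i = R (x0 i) ((- \<alpha>) *\<^sub>R grad_phi W t x0 i + \<beta> *\<^sub>R u i)"
    and alpha: "0 \<le> \<alpha>" "\<alpha> \<le> 1 / M"
    and beta: "\<beta> \<ge> 0"
  shows "norm (xbar0 - xbar1) \<le>
     1 / (1 - 2 * \<delta>1\<^sup>2) *
       ((2 * (L_const W t)\<^sup>2 * \<alpha> + L_const W t * \<alpha>) / real CARD('n) * (\<Sum>i\<in>UNIV. (norm (x0 i - xbar0))\<^sup>2)
        + \<beta> * norm ((1 / real CARD('n)) *\<^sub>R (\<Sum>i\<in>UNIV. u i))
        + 2 * M * \<beta>\<^sup>2 / real CARD('n) * (\<Sum>i\<in>UNIV. (norm (u i))\<^sup>2))"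
proof -
  interpret T: symmetric_stochastic_matrix "matpow W t"
    by (intro symmetric_stochastic_matrix_matpow symmetric_stochastic_matrix.intro)
      (use Wsym Wrow Wnonneg in auto)
  have x0s: "\<forall>i. x0 i \<in> stiefel"
    using N0 by (simp add: in_N1_def)
  have "\<delta>2 / (5 * sqrt (real CARD('r))) \<le> \<delta>2 / 5"
    using d2pos by (intro divide_left_mono) auto
  then have "\<delta>1\<^sup>2 \<le> (1/30)\<^sup>2"
    using d1pos d1d2 d2 by (intro power_mono) auto
  then have c: "0 < 1 - 2 * \<delta>1\<^sup>2"
    by (simp add: power2_eq_square)
  have "(1 - 2 * \<delta>1\<^sup>2) * norm (xbar0 - xbar1) \<le> (1 - \<delta>1\<^sup>2 / 2) * norm (xbar0 - xbar1)"
    by (intro mult_right_mono) simp_all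
  also have "\<dots> \<le> norm (arith_mean x0 - arith_mean x1)"
    using N0 by (intro iam_dist_le_arith_mean_dist[OF iam0 iam1 _ N1 retr Mbound]) simp
  also have "\<dots> \<le> (2 * (L_const W t)\<^sup>2 * \<alpha> + L_const W t * \<alpha>) / real CARD('n) * sum_sq_dist x0 xbar0
      + \<beta> * norm (arith_mean u) + 2 * M * \<beta>\<^sup>2 / real CARD('n) * (\<Sum>i\<in>UNIV. (norm (u i))\<^sup>2)"
    unfolding L_const_def
    by (rule T.arith_mean_step_bound[OF Mbound Mpos x0s utan _ alpha beta])
      (use step in \<open>simp add: grad_phi_eq_proj_laplacian\<close>)
  finally show ?thesis
    using c by (simp add: arith_mean_def sum_sq_dist_def field_simps)
qed

end
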